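(* Let $({\mathbf\Lambda}^\star,{\mathbf V}^\star)$ with ${\mathbf\Lambda}^\star,{\mathbf V}^\star\ge0$ be a minimizer of $F$ over pairs of entrywise nonnegative matrices. Then for every randomized prediction $\pi$ supported on the grid and satisfying $\mathcal U_s(\pi,\ell)\le\epsilon_s$ for all $\ell\in[\![L]\!]$, $s\in[K]$, we have $$\mathcal R(\pi_{{\mathbf\Lambda}^\star,{\mathbf V}^\star})\le\mathcal R(\pi)+\frac{\log(2L+1)}{\beta}.$$
   Context: Let $K\ge 2$, $d\ge1$, and let $(X,S,Y)$ be a random triple with values in $\mathbb R^d\times[K]\times\mathbb R$, $\mathbb E[Y^2]<\infty$. Put $\eta(x)=\mathbb E[Y\mid X=x]$, $p_s=\mathbb P(S=s)>0$, $\tau_s(x)=\mathbb P(S=s\mid X=x)$, $t_s(x)=1-\tau_s(x)/p_s$, $\mathbf t(x)=(t_s(x))_{s\in[K]}$. Fix $B>0$, $L\in\mathbb N$, $\beta>0$, $\boldsymbol\epsilon=(\epsilon_s)\in[0,1]^K$; $[\![L]\!]=\{-L,\dots,L\}$, $r_\ell(x)=(\eta(x)-\ell B/L)^2$. A randomized prediction is a Markov kernel $\pi$ from $\mathbb R^d$ to $\mathbb R$; it is supported on the grid if each $\pi(\cdot\mid x)$ is concentrated on $\{\ell B/L:\ell\in[\![L]\!]\}$, with $\pi(\ell\mid x)$ the mass at $\ell B/L$. $\mathcal R(\pi)=\mathbb E[\int(\hat y-\eta(X))^2\pi(d\hat y\mid X)]$; $\mathcal U_s(\pi,\ell)=|\mathbb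 E[\pi(\ell\mid X)\mid S=s]-\mathbb E[\pi(\ell\mid X)]|$. $\mathrm{LSE}_\beta(\mathbf w)=\beta^{-1}\log\sum_j e^{\beta w_j}$, $\sigma_j(\mathbf w)=e^{w_j}/\sum_ie^{w_i}$. For ${\mathbf\Lambda}=(\lambda_{\ell s}),{\mathbf V}=(\nu_{\ell s})$ with rows $\boldsymbol\lambda_\ell,\boldsymbol\nu_\ell\in\mathbb R^K$: $F({\mathbf\Lambda},{\mathbf V})=\mathbb E\big[\mathrm{LSE}_\beta\big((\langle\boldsymbol\lambda_\ell-\boldsymbol\nu_\ell,\mathbf t(X)\rangle-r_\ell(X))_{\ell\in[\![L]\!]}\big)\big]+\sum_{\ell}\langle\boldsymbol\lambda_\ell+\boldsymbol\nu_\ell,\boldsymbol\epsilon\rangle$, and $\pi_{{\mathbf\Lambda},{\mathbf V}}(\ell\mid x)=\sigma_\ell\big(\beta(\langle\boldsymbol\lambda_{\ell'}-\boldsymbol\nu_{\ell'},\mathbf t(x)\rangle-r_{\ell'}(x))_{\ell'\in[\![L]\!]}\big)$. *)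

theory Defs
  imports "HOL-Probability.Probability"
begin

definition grid :: "real \<Rightarrow> nat \<Rightarrow> int \<Rightarrow> real" where
  "grid B L l = real_of_int l * B / real L"

definition LSE :: "real \<Rightarrow> 'i set \<Rightarrow> ('i \<Rightarrow> real) \<Rightarrow> real" where
  "LSE \<beta> I w = ln (\<Sum>j\<in>I. exp (\<beta> * w j)) / \<beta>"

definition softmax :: "'i set \<Rightarrow> ('i \<Rightarrow> real) \<Rightarrow> 'i \<Rightarrow> real" where
  "softmax I w j = exp (w j) / (\<Sum>i\<in>I. exp (w i))"

definition pS :: "'a measure \<Rightarrow> ('a \<Rightarrow> nat) \<Rightarrow> nat \<Rightarrow> real" where
  "pS M S s = measure M {\<omega> \<in> space M. S \<omega> = s}"

definition tfun :: "'a measure \<Rightarrow> ('a \<Rightarrow> nat) \<Rightarrow> (nat \<Rightarrow> 'x \<Rightarrow> real) \<Rightarrow> nat \<Rightarrow> 'x \<Rightarrow> real" where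
  "tfun M S \<tau> s x = 1 - \<tau> s x / pS M S s"

definition rfun :: "real \<Rightarrow> nat \<Rightarrow> ('x \<Rightarrow> real) \<Rightarrow> int \<Rightarrow> 'x \<Rightarrow> real" where
  "rfun B L \<eta> l x = (\<eta> x - grid B L l)\<^sup>2"

definition score :: "'a measure \<Rightarrow> ('a \<Rightarrow> nat) \<Rightarrow> nat \<Rightarrow> real \<Rightarrow> nat \<Rightarrow> ('x \<Rightarrow> real)
    \<Rightarrow> (nat \<Rightarrow> 'x \<Rightarrow> real) \<Rightarrow> (int \<Rightarrow> nat \<Rightarrow> real) \<Rightarrow> (int \<Rightarrow> nat \<Rightarrow> real) \<Rightarrow> int \<Rightarrow> 'x \<Rightarrow> real" where
  "score M S K B L \<eta> \<tau> \<Lambda> V l x =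
     (\<Sum>s\<in>{1..K}. (\<Lambda> l s - V l s) * tfun M S \<tau> s x) - rfun B L \<eta> l x"

definition Fobj :: "'a measure \<Rightarrow> ('a \<Rightarrow> 'x) \<Rightarrow> ('a \<Rightarrow> nat) \<Rightarrow> nat \<Rightarrow> real \<Rightarrow> nat \<Rightarrow> real
    \<Rightarrow> (nat \<Rightarrow> real) \<Rightarrow> ('x \<Rightarrow> real) \<Rightarrow> (nat \<Rightarrow> 'x \<Rightarrow> real)
    \<Rightarrow> (int \<Rightarrow> nat \<Rightarrow> real) \<Rightarrow> (int \<Rightarrow> nat \<Rightarrow> real) \<Rightarrow> real" where
  "Fobj M X S K B L \<beta> \<epsilon> \<eta> \<tau> \<Lambda> V =
     (\<integral>\<omega>. LSE \<beta> {-int L..int L} (\<lambda>l. score M S K B L \<eta> \<tau> \<Lambda> V l (X \<omega>)) \<partial>M)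
     + (\<Sum>l\<in>{-int L..int L}. \<Sum>s\<in>{1..K}. (\<Lambda> l s + V l s) * \<epsilon> s)"

definition pi_dual :: "'a measure \<Rightarrow> ('a \<Rightarrow> nat) \<Rightarrow> nat \<Rightarrow> real \<Rightarrow> nat \<Rightarrow> real
    \<Rightarrow> ('x \<Rightarrow> real) \<Rightarrow> (nat \<Rightarrow> 'x \<Rightarrow> real)
    \<Rightarrow> (int \<Rightarrow> nat \<Rightarrow> real) \<Rightarrow> (int \<Rightarrow> nat \<Rightarrow> real) \<Rightarrow> 'x \<Rightarrow> int \<Rightarrow> real" where
  "pi_dual M S K B L \<beta> \<eta> \<tau> \<Lambda> V x l =
     softmax {-int L..int L} (\<lambda>l'. \<beta> * score M S K B L \<eta> \<tau> \<Lambda> V l' x) l"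

text \<open>A randomized prediction supported on the grid, given by its masses pi(l|x):
  a Markov kernel concentrated on {l B / L : l in {-L..L}}.\<close>
definition grid_prediction :: "nat \<Rightarrow> ('x::topological_space \<Rightarrow> int \<Rightarrow> real) \<Rightarrow> bool" where
  "grid_prediction L \<pi> \<longleftrightarrow>
     (\<forall>l. (\<lambda>x. \<pi> x l) \<in> borel_measurable borel) \<and>
     (\<forall>x l. 0 \<le> \<pi> x l) \<and>
     (\<forall>x l. l \<notin> {-int L..int L} \<longrightarrow> \<pi> x l = 0) \<and>
     (\<forall>x. (\<Sum>l\<in>{-int L..int L}. \<pi> x l) = 1)"

definition risk :: "'a measure \<Rightarrow> ('a \<Rightarrow> 'x) \<Rightarrow> real \<Rightarrow> nat \<Rightarrow> ('x \<Rightarrow> real) \<Rightarrow> ('x \<Rightarrow> int \<Rightarrow> real) \<Rightarrow> real" where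
  "risk M X B L \<eta> \<pi> =
     (\<integral>\<omega>. (\<Sum>l\<in>{-int L..int L}. \<pi> (X \<omega>) l * (grid B L l - \<eta> (X \<omega>))\<^sup>2) \<partial>M)"

definition unfair :: "'a measure \<Rightarrow> ('a \<Rightarrow> 'x) \<Rightarrow> ('a \<Rightarrow> nat) \<Rightarrow> ('x \<Rightarrow> int \<Rightarrow> real) \<Rightarrow> nat \<Rightarrow> int \<Rightarrow> real" where
  "unfair M X S \<pi> s l =
     \<bar>(\<integral>\<omega>. \<pi> (X \<omega>) l * indicator {\<omega>\<in>space M. S \<omega> = s} \<omega> \<partial>M) / pS M S s
      - (\<integral>\<omega>. \<pi> (X \<omega>) l \<partial>M)\<bar>"

end

theory Submission
  imports Defs
begin

text \<open>Write \<open>\<sigma>\<close> for the Gibbs prediction, the softmax of the scores \<open>b\<^sub>l - r\<^sub>l\<close> with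
  \<open>b\<^sub>l = \<langle>\<lambda>\<^sup>\<star>\<^sub>l - \<nu>\<^sup>\<star>\<^sub>l, t(X)\<rangle>\<close>, and \<open>c = \<Sum>\<^sub>l \<langle>\<lambda>\<^sup>\<star>\<^sub>l + \<nu>\<^sup>\<star>\<^sub>l, \<epsilon>\<rangle>\<close>.
  Since \<open>E[\<pi>(l|X) t\<^sub>s(X)]\<close> is minus the parity gap of \<open>\<pi>\<close>, a fair \<open>\<pi>\<close> has \<open>E[\<Sum>\<^sub>l \<pi>(l|X) b\<^sub>l] \<ge> -c\<close>,
  and as LSE dominates every convex combination, \<open>-R(\<pi>) \<le> F(\<Lambda>\<^sup>\<star>, V\<^sup>\<star>)\<close> (weak duality).
  Gibbs' variational inequality gives \<open>F(\<Lambda>\<^sup>\<star>, V\<^sup>\<star>) \<le> E[\<Sum>\<^sub>l \<sigma>\<^sub>l b\<^sub>l] + c - R(\<sigma>) + log(2L+1)/\<beta>\<close>.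
  Finally \<open>(1 - \<delta>)(\<Lambda>\<^sup>\<star>, V\<^sup>\<star>)\<close> is feasible, and a second-order expansion of LSE in \<open>\<delta>\<close> shows
  that minimality forces \<open>E[\<Sum>\<^sub>l \<sigma>\<^sub>l b\<^sub>l] + c \<le> 0\<close>.\<close>

lemma exp_le_one_plus_sq:
  fixes x :: real
  assumes "\<bar>x\<bar> \<le> 1"
  shows "exp x \<le> 1 + x + x\<^sup>2"
proof (cases "0 \<le> x")
  case True
  then show ?thesis using exp_bound assms by auto
next
  case False
  define y where "y = - x"
  have y: "0 \<le> y" "y \<le> 1" using False assms by (auto simp: y_def)
  have "1 + y \<le> exp y" by (rule exp_ge_add_one_self)
  then have "(1 + y) * (1 - y + y\<^sup>2) \<le> exp y * (1 - y + y\<^sup>2)"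
    by (rule mult_right_mono) (use y zero_le_power2[of y] in linarith)
  moreover have "(1 + y) * (1 - y + y\<^sup>2) = 1 + y ^ 3"
    by (simp add: algebra_simps power2_eq_square power3_eq_cube)
  moreover have "0 \<le> y ^ 3" using y by simp
  ultimately have "1 \<le> exp y * (1 - y + y\<^sup>2)" by linarith
  then have "exp (- y) \<le> exp (- y) * (exp y * (1 - y + y\<^sup>2))" by simp
  also have "\<dots> = 1 - y + y\<^sup>2" by (simp add: exp_minus field_simps)
  finally show ?thesis by (simp add: y_def)
qed

lemma softmax_nonneg: "finite I \<Longrightarrow> 0 \<le> softmax I w j"
  unfolding softmax_def by (auto intro!: divide_nonneg_nonneg sum_nonneg)

lemma sum_softmax:
  assumes "finite I" "I \<noteq> {}"
  shows "(\<Sum>j\<in>I. softmax I w j) = 1"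
proof -
  have "0 < (\<Sum>i\<in>I. exp (w i))" using assms by (intro sum_pos) auto
  then show ?thesis unfolding softmax_def by (simp add: sum_divide_distrib[symmetric])
qed

lemma member_le_LSE:
  assumes "finite I" "j \<in> I" "0 < \<beta>"
  shows "w j \<le> LSE \<beta> I w"
proof -
  have "exp (\<beta> * w j) \<le> (\<Sum>i\<in>I. exp (\<beta> * w i))"
    using assms by (intro member_le_sum) auto
  then have "\<beta> * w j \<le> ln (\<Sum>i\<in>I. exp (\<beta> * w i))"
    using assms by (subst ln_ge_iff) (auto intro: sum_pos)
  then show ?thesis using assms unfolding LSE_def by (simp add: field_simps)
qed

lemma convex_comb_le_LSE:
  assumes "finite I" "0 < \<beta>" "\<And>j. j \<in> I \<Longrightarrow> 0 \<le> q j" "(\<Sum>j\<in>I. q j) = 1"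
  shows "(\<Sum>j\<in>I. q j * w j) \<le> LSE \<beta> I w"
proof -
  have "(\<Sum>j\<in>I. q j * w j) \<le> (\<Sum>j\<in>I. q j * LSE \<beta> I w)"
    using assms member_le_LSE[OF assms(1) _ assms(2)] by (intro sum_mono mult_left_mono) auto
  also have "\<dots> = LSE \<beta> I w" using assms by (simp add: sum_distrib_right[symmetric])
  finally show ?thesis .
qed

lemma LSE_le_bound:
  assumes "finite I" "I \<noteq> {}" "0 < \<beta>" "\<And>j. j \<in> I \<Longrightarrow> w j \<le> c"
  shows "LSE \<beta> I w \<le> c + ln (card I) / \<beta>"
proof -
  have "(\<Sum>i\<in>I. exp (\<beta> * w i)) \<le> (\<Sum>i\<in>I. exp (\<beta> * c))"
    using assms by (intro sum_mono) auto
  then have "ln (\<Sum>i\<in>I. exp (\<beta> * w i)) \<le> ln (card I * exp (\<beta> * c))"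
    using assms by (subst ln_le_cancel_iff) (auto intro: sum_pos simp: card_gt_0_iff)
  also have "\<dots> = ln (card I) + \<beta> * c" using assms by (simp add: ln_mult card_gt_0_iff)
  finally show ?thesis using assms unfolding LSE_def by (simp add: field_simps)
qed

text \<open>Gibbs variational inequality: the entropy of the softmax weights is at most \<open>ln (card I)\<close>.\<close>
lemma LSE_le_softmax_mean:
  assumes "finite I" "I \<noteq> {}" "0 < \<beta>"
  shows "LSE \<beta> I w \<le> (\<Sum>j\<in>I. softmax I (\<lambda>l. \<beta> * w l) j * w j) + ln (card I) / \<beta>"
proof -
  define Z where "Z = (\<Sum>i\<in>I. exp (\<beta> * w i))"
  define \<sigma> where "\<sigma> = softmax I (\<lambda>l. \<beta> * w l)"
  define n where "n = real (card I)"
  have Z: "0 < Z" unfolding Z_def using assms by (intro sum_pos) auto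
  have n: "0 < n" using assms by (simp add: n_def card_gt_0_iff)
  have \<sigma>_pos: "0 < \<sigma> j" for j using Z by (simp add: \<sigma>_def softmax_def Z_def)
  have \<sigma>_sum: "(\<Sum>j\<in>I. \<sigma> j) = 1" unfolding \<sigma>_def using assms(1,2) by (rule sum_softmax)
  have ln_\<sigma>: "ln (1 / (n * \<sigma> j)) = ln Z - \<beta> * w j - ln n" for j
    using Z n by (simp add: \<sigma>_def softmax_def Z_def ln_div ln_mult)
  have "(\<Sum>j\<in>I. \<sigma> j * ln (1 / (n * \<sigma> j))) \<le> (\<Sum>j\<in>I. \<sigma> j * (1 / (n * \<sigma> j) - 1))"
    using \<sigma>_pos n by (intro sum_mono mult_left_mono ln_le_minus_one) (auto intro: less_imp_le)
  also have "\<dots> = (\<Sum>j\<in>I. 1 / n - \<sigma> j)"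
    using \<sigma>_pos[THEN less_imp_neq] n by (intro sum.cong refl) (simp add: field_simps)
  also have "\<dots> = 0" using \<sigma>_sum n by (simp add: sum_subtractf n_def)
  finally have "(\<Sum>j\<in>I. \<sigma> j * (ln Z - \<beta> * w j - ln n)) \<le> 0" by (simp add: ln_\<sigma>)
  moreover have "(\<Sum>j\<in>I. \<sigma> j * (ln Z - \<beta> * w j - ln n))
      = (\<Sum>j\<in>I. \<sigma> j) * (ln Z - ln n) - \<beta> * (\<Sum>j\<in>I. \<sigma> j * w j)"
    by (simp add: sum_distrib_right sum_distrib_left sum_subtractf sum.distrib algebra_simps)
  ultimately have "ln Z \<le> \<beta> * (\<Sum>j\<in>I. \<sigma> j * w j) + ln n" using \<sigma>_sum by simp
  then show ?thesis using assms unfolding LSE_def Z_def[symmetric] \<sigma>_def[symmetric] n_def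
    by (simp add: field_simps)
qed

lemma LSE_add:
  assumes "finite I" "I \<noteq> {}" "0 < \<beta>"
  shows "LSE \<beta> I (\<lambda>l. w l + v l)
           = LSE \<beta> I w + ln (\<Sum>j\<in>I. softmax I (\<lambda>l. \<beta> * w l) j * exp (\<beta> * v j)) / \<beta>"
proof -
  define Z where "Z = (\<Sum>i\<in>I. exp (\<beta> * w i))"
  have Z: "0 < Z" unfolding Z_def using assms by (intro sum_pos) auto
  have "(\<Sum>i\<in>I. exp (\<beta> * (w i + v i))) = Z * (\<Sum>j\<in>I. softmax I (\<lambda>l. \<beta> * w l) j * exp (\<beta> * v j))"
    using Z by (simp add: softmax_def Z_def[symmetric] sum_distrib_left distrib_left exp_add)
  moreover have "0 < (\<Sum>j\<in>I. softmax I (\<lambda>l. \<beta> * w l) j * exp (\<beta> * v j))"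
    using assms Z by (intro sum_pos) (auto simp: softmax_def Z_def[symmetric])
  ultimately show ?thesis
    using Z unfolding LSE_def Z_def[symmetric] by (simp add: ln_mult add_divide_distrib)
qed

lemma LSE_diff_le:
  assumes "finite I" "I \<noteq> {}" "0 < \<beta>" "0 \<le> \<delta>" "\<And>l. l \<in> I \<Longrightarrow> \<bar>b l\<bar> \<le> C" "\<beta> * \<delta> * C \<le> 1"
  shows "LSE \<beta> I (\<lambda>l. w l - \<delta> * b l)
           \<le> LSE \<beta> I w - \<delta> * (\<Sum>j\<in>I. softmax I (\<lambda>l. \<beta> * w l) j * b j) + \<beta> * \<delta>\<^sup>2 * C\<^sup>2"
proof -
  define \<sigma> where "\<sigma> = softmax I (\<lambda>l. \<beta> * w l)"
  define Q where "Q = (\<Sum>j\<in>I. \<sigma> j * exp (\<beta> * (- \<delta> * b j)))"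
  have \<sigma>_nonneg: "0 \<le> \<sigma> j" for j unfolding \<sigma>_def using assms(1) by (rule softmax_nonneg)
  have \<sigma>_sum: "(\<Sum>j\<in>I. \<sigma> j) = 1" unfolding \<sigma>_def using assms(1,2) by (rule sum_softmax)
  have exp_le: "exp (\<beta> * (- \<delta> * b j)) - 1 \<le> - \<beta> * \<delta> * b j + (\<beta> * \<delta> * C)\<^sup>2" if "j \<in> I" for j
  proof -
    have "\<bar>\<beta> * (- \<delta> * b j)\<bar> = (\<beta> * \<delta>) * \<bar>b j\<bar>" using assms by (simp add: abs_mult)
    also have "\<dots> \<le> (\<beta> * \<delta>) * C" using assms that by (intro mult_left_mono) auto
    finally have x: "\<bar>\<beta> * (- \<delta> * b j)\<bar> \<le> \<beta> * \<delta> * C" .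
    then have "(\<beta> * (- \<delta> * b j))\<^sup>2 \<le> (\<beta> * \<delta> * C)\<^sup>2"
      by (metis abs_ge_zero power2_abs power_mono)
    moreover have "exp (\<beta> * (- \<delta> * b j)) \<le> 1 + \<beta> * (- \<delta> * b j) + (\<beta> * (- \<delta> * b j))\<^sup>2"
      using x assms(6) by (intro exp_le_one_plus_sq) linarith
    moreover have "\<beta> * (- \<delta> * b j) = - \<beta> * \<delta> * b j" by simp
    ultimately show ?thesis by linarith
  qed
  have "ln Q \<le> Q - 1"
    unfolding Q_def \<sigma>_def softmax_def using assms
    by (intro ln_le_minus_one sum_pos) (auto intro!: divide_pos_pos sum_pos)
  also have "\<dots> = (\<Sum>j\<in>I. \<sigma> j * (exp (\<beta> * (- \<delta> * b j)) - 1))"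
    using \<sigma>_sum by (simp add: Q_def right_diff_distrib sum_subtractf)
  also have "\<dots> \<le> (\<Sum>j\<in>I. \<sigma> j * (- \<beta> * \<delta> * b j + (\<beta> * \<delta> * C)\<^sup>2))"
    using exp_le \<sigma>_nonneg by (intro sum_mono mult_left_mono) auto
  also have "\<dots> = - \<beta> * \<delta> * (\<Sum>j\<in>I. \<sigma> j * b j) + (\<Sum>j\<in>I. \<sigma> j) * (\<beta> * \<delta> * C)\<^sup>2"
    by (simp add: sum.distrib[symmetric] sum_distrib_left sum_distrib_right algebra_simps)
  also have "\<dots> = - \<beta> * \<delta> * (\<Sum>j\<in>I. \<sigma> j * b j) + (\<beta> * \<delta> * C)\<^sup>2"
    by (simp add: \<sigma>_sum)
  finally have "ln Q / \<beta> \<le> - \<delta> * (\<Sum>j\<in>I. \<sigma> j * b j) + \<beta> * \<delta>\<^sup>2 * C\<^sup>2"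
    using assms(3) by (simp add: field_simps power2_eq_square)
  then show ?thesis
    using LSE_add[OF assms(1-3), of w "\<lambda>l. - \<delta> * b l"] unfolding \<sigma>_def Q_def by simp
qed

text \<open>In the application, \<open>b l\<close> is \<open>\<langle>\<lambda>\<^sub>l - \<nu>\<^sub>l, t(X)\<rangle>\<close> for the optimal multipliers, \<open>r l\<close> is
  \<open>r\<^sub>l(X)\<close>, and \<open>dual a + a c\<close> is \<open>F\<close> at the multipliers scaled by \<open>a\<close>, \<open>c\<close> being its penalty term.\<close>
locale LSE_duality = prob_space M
  for M :: "'a measure" and I :: "'i set" and \<beta> :: real and b r :: "'i \<Rightarrow> 'a \<Rightarrow> real" and C :: real +
  assumes finite_I: "finite I" and I_nonempty: "I \<noteq> {}" and beta_pos: "0 < \<beta>"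
    and b_measurable [measurable]: "\<And>l. b l \<in> borel_measurable M"
    and r_integrable: "\<And>l. integrable M (r l)"
    and r_nonneg: "\<And>l \<omega>. 0 \<le> r l \<omega>"
    and b_bounded: "AE \<omega> in M. \<forall>l\<in>I. \<bar>b l \<omega>\<bar> \<le> C"
begin

lemma r_measurable [measurable]: "r l \<in> borel_measurable M"
  using r_integrable by blast

definition random_weights :: "('a \<Rightarrow> 'i \<Rightarrow> real) \<Rightarrow> bool" where
  "random_weights p \<longleftrightarrow> (\<forall>l. (\<lambda>\<omega>. p \<omega> l) \<in> borel_measurable M) \<and> (\<forall>\<omega> l. 0 \<le> p \<omega> l)
     \<and> (\<forall>\<omega>. (\<Sum>l\<in>I. p \<omega> l) = 1)"

definition gibbs :: "'a \<Rightarrow> 'i \<Rightarrow> real" where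
  "gibbs \<omega> = softmax I (\<lambda>l. \<beta> * (b l \<omega> - r l \<omega>))"

definition dual :: "real \<Rightarrow> real" where
  "dual a = (\<integral>\<omega>. LSE \<beta> I (\<lambda>l. a * b l \<omega> - r l \<omega>) \<partial>M)"

lemma random_weights_gibbs: "random_weights gibbs"
  unfolding random_weights_def gibbs_def
  using finite_I I_nonempty by (auto simp: softmax_nonneg sum_softmax) (simp add: softmax_def)

lemma random_weights_le_1:
  assumes "random_weights p" "l \<in> I"
  shows "p \<omega> l \<le> 1"
  using assms finite_I member_le_sum[of l I "p \<omega>"] unfolding random_weights_def by auto

lemma integrable_weighted_b:
  assumes "random_weights p"
  shows "integrable M (\<lambda>\<omega>. \<Sum>l\<in>I. p \<omega> l * b l \<omega>)"
proof (rule integrable_const_bound[where B = C])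
  note [measurable] = assms[unfolded random_weights_def, THEN conjunct1, rule_format]
  show "(\<lambda>\<omega>. \<Sum>l\<in>I. p \<omega> l * b l \<omega>) \<in> borel_measurable M" by measurable
  show "AE \<omega> in M. norm (\<Sum>l\<in>I. p \<omega> l * b l \<omega>) \<le> C"
    using b_bounded
  proof eventually_elim
    case (elim \<omega>)
    have "\<bar>\<Sum>l\<in>I. p \<omega> l * b l \<omega>\<bar> \<le> (\<Sum>l\<in>I. p \<omega> l * C)"
      using elim assms unfolding random_weights_def
      by (intro order_trans[OF sum_abs] sum_mono) (auto simp: abs_mult intro: mult_left_mono)
    also have "\<dots> = C"
      using assms unfolding random_weights_def by (simp flip: sum_distrib_right)
    finally show ?case by simp
  qed
qed

lemma integrable_weighted_r:
  assumes "random_weights p"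
  shows "integrable M (\<lambda>\<omega>. \<Sum>l\<in>I. p \<omega> l * r l \<omega>)"
proof (intro Bochner_Integration.integrable_sum)
  fix l assume l: "l \<in> I"
  note [measurable] = assms[unfolded random_weights_def, THEN conjunct1, rule_format]
  show "integrable M (\<lambda>\<omega>. p \<omega> l * r l \<omega>)"
  proof (rule Bochner_Integration.integrable_bound[OF r_integrable[of l]])
    show "AE \<omega> in M. norm (p \<omega> l * r l \<omega>) \<le> norm (r l \<omega>)"
      using assms random_weights_le_1[OF assms l] r_nonneg
      unfolding random_weights_def by (auto simp: abs_mult intro!: mult_left_le_one_le)
  qed measurable
qed

lemma integrable_LSE_scaled:
  assumes "0 \<le> a" "a \<le> 1"
  shows "integrable M (\<lambda>\<omega>. LSE \<beta> I (\<lambda>l. a * b l \<omega> - r l \<omega>))"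
proof -
  obtain j where j: "j \<in> I" using I_nonempty by blast
  define u where "u = C + ln (card I) / \<beta>"
  show ?thesis
  proof (rule Bochner_Integration.integrable_bound[where f = "\<lambda>\<omega>. r j \<omega> + u"])
    show "integrable M (\<lambda>\<omega>. r j \<omega> + u)" using r_integrable by auto
    show "(\<lambda>\<omega>. LSE \<beta> I (\<lambda>l. a * b l \<omega> - r l \<omega>)) \<in> borel_measurable M"
      unfolding LSE_def by measurable
    show "AE \<omega> in M. norm (LSE \<beta> I (\<lambda>l. a * b l \<omega> - r l \<omega>)) \<le> norm (r j \<omega> + u)"
      using b_bounded
    proof eventually_elim
      case (elim \<omega>)
      have ab: "\<bar>a * b l \<omega>\<bar> \<le> C" if "l \<in> I" for l
        using assms elim that by (auto simp: abs_mult intro: mult_le_one order_trans[OF mult_left_le_one_le])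
      have "a * b j \<omega> - r j \<omega> \<le> LSE \<beta> I (\<lambda>l. a * b l \<omega> - r l \<omega>)"
        using finite_I j beta_pos by (rule member_le_LSE)
      moreover have "LSE \<beta> I (\<lambda>l. a * b l \<omega> - r l \<omega>) \<le> u"
        unfolding u_def using finite_I I_nonempty beta_pos
        by (rule LSE_le_bound) (use ab r_nonneg abs_le_iff in \<open>smt (verit)\<close>)
      moreover have "0 \<le> ln (card I) / \<beta>"
        using finite_I I_nonempty beta_pos
        by (intro divide_nonneg_pos ln_ge_zero) (auto simp: Suc_le_eq card_gt_0_iff)
      ultimately show ?case using ab[OF j] r_nonneg[of j \<omega>] unfolding u_def by auto
    qed
  qed
qed

lemma dual_ge_weighted:
  assumes "random_weights p"
  shows "(\<integral>\<omega>. (\<Sum>l\<in>I. p \<omega> l * b l \<omega>) \<partial>M) - (\<integral>\<omega>. (\<Sum>l\<in>I. p \<omega> l * r l \<omega>) \<partial>M) \<le> dual 1"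
proof -
  have "(\<integral>\<omega>. (\<Sum>l\<in>I. p \<omega> l * b l \<omega>) \<partial>M) - (\<integral>\<omega>. (\<Sum>l\<in>I. p \<omega> l * r l \<omega>) \<partial>M)
      = (\<integral>\<omega>. (\<Sum>l\<in>I. p \<omega> l * (1 * b l \<omega> - r l \<omega>)) \<partial>M)"
    using integrable_weighted_b[OF assms] integrable_weighted_r[OF assms]
    by (simp add: right_diff_distrib sum_subtractf)
  also have "\<dots> \<le> dual 1"
    unfolding dual_def
  proof (rule integral_mono)
    show "integrable M (\<lambda>\<omega>. \<Sum>l\<in>I. p \<omega> l * (1 * b l \<omega> - r l \<omega>))"
      using integrable_weighted_b[OF assms] integrable_weighted_r[OF assms]
      by (simp add: right_diff_distrib sum_subtractf)
    show "integrable M (\<lambda>\<omega>. LSE \<beta> I (\<lambda>l. 1 * b l \<omega> - r l \<omega>))"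
      by (rule integrable_LSE_scaled) auto
    show "(\<Sum>l\<in>I. p \<omega> l * (1 * b l \<omega> - r l \<omega>)) \<le> LSE \<beta> I (\<lambda>l. 1 * b l \<omega> - r l \<omega>)" for \<omega>
      using assms finite_I beta_pos unfolding random_weights_def by (intro convex_comb_le_LSE) auto
  qed
  finally show ?thesis .
qed

lemma dual_le_gibbs:
  "dual 1 \<le> (\<integral>\<omega>. (\<Sum>l\<in>I. gibbs \<omega> l * b l \<omega>) \<partial>M) - (\<integral>\<omega>. (\<Sum>l\<in>I. gibbs \<omega> l * r l \<omega>) \<partial>M)
     + ln (card I) / \<beta>"
proof -
  have "dual 1 \<le> (\<integral>\<omega>. (\<Sum>l\<in>I. gibbs \<omega> l * (b l \<omega> - r l \<omega>)) + ln (card I) / \<beta> \<partial>M)"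
    unfolding dual_def
  proof (rule integral_mono)
    show "integrable M (\<lambda>\<omega>. LSE \<beta> I (\<lambda>l. 1 * b l \<omega> - r l \<omega>))"
      by (rule integrable_LSE_scaled) auto
    show "integrable M (\<lambda>\<omega>. (\<Sum>l\<in>I. gibbs \<omega> l * (b l \<omega> - r l \<omega>)) + ln (card I) / \<beta>)"
      using integrable_weighted_b[OF random_weights_gibbs] integrable_weighted_r[OF random_weights_gibbs]
      by (simp add: right_diff_distrib sum_subtractf)
    show "LSE \<beta> I (\<lambda>l. 1 * b l \<omega> - r l \<omega>) \<le> (\<Sum>l\<in>I. gibbs \<omega> l * (b l \<omega> - r l \<omega>)) + ln (card I) / \<beta>"
      for \<omega>
      using LSE_le_softmax_mean[OF finite_I I_nonempty beta_pos] by (simp add: gibbs_def)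
  qed
  then show ?thesis
    using integrable_weighted_b[OF random_weights_gibbs] integrable_weighted_r[OF random_weights_gibbs]
    by (simp add: right_diff_distrib sum_subtractf prob_space)
qed

lemma dual_shrink_le:
  assumes "0 \<le> \<delta>" "\<delta> \<le> 1" "\<beta> * \<delta> * C \<le> 1"
  shows "dual (1 - \<delta>) \<le> dual 1 - \<delta> * (\<integral>\<omega>. (\<Sum>l\<in>I. gibbs \<omega> l * b l \<omega>) \<partial>M) + \<beta> * \<delta>\<^sup>2 * C\<^sup>2"
proof -
  have "dual (1 - \<delta>)
      \<le> (\<integral>\<omega>. LSE \<beta> I (\<lambda>l. 1 * b l \<omega> - r l \<omega>) - \<delta> * (\<Sum>l\<in>I. gibbs \<omega> l * b l \<omega>) + \<beta> * \<delta>\<^sup>2 * C\<^sup>2 \<partial>M)"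
    unfolding dual_def
  proof (rule integral_mono_AE)
    show "integrable M (\<lambda>\<omega>. LSE \<beta> I (\<lambda>l. (1 - \<delta>) * b l \<omega> - r l \<omega>))"
      using assms by (intro integrable_LSE_scaled) auto
    show "integrable M (\<lambda>\<omega>. LSE \<beta> I (\<lambda>l. 1 * b l \<omega> - r l \<omega>) - \<delta> * (\<Sum>l\<in>I. gibbs \<omega> l * b l \<omega>)
        + \<beta> * \<delta>\<^sup>2 * C\<^sup>2)"
      using integrable_LSE_scaled[of 1] integrable_weighted_b[OF random_weights_gibbs] by auto
    show "AE \<omega> in M. LSE \<beta> I (\<lambda>l. (1 - \<delta>) * b l \<omega> - r l \<omega>)
        \<le> LSE \<beta> I (\<lambda>l. 1 * b l \<omega> - r l \<omega>) - \<delta> * (\<Sum>l\<in>I. gibbs \<omega> l * b l \<omega>) + \<beta> * \<delta>\<^sup>2 * C\<^sup>2"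
      using b_bounded
    proof eventually_elim
      case (elim \<omega>)
      have "(\<lambda>l. (1 - \<delta>) * b l \<omega> - r l \<omega>) = (\<lambda>l. (b l \<omega> - r l \<omega>) - \<delta> * b l \<omega>)"
        by (auto simp: algebra_simps)
      then show ?case
        using LSE_diff_le[OF finite_I I_nonempty beta_pos assms(1) _ assms(3), of "\<lambda>l. b l \<omega>"] elim
        by (simp add: gibbs_def)
    qed
  qed
  then show ?thesis
    using integrable_LSE_scaled[of 1] integrable_weighted_b[OF random_weights_gibbs]
    by (simp add: dual_def prob_space)
qed

text \<open>If shrinking the multipliers never decreases the objective, the first-order term of
  \<open>dual_shrink_le\<close> must be nonpositive: its quadratic remainder vanishes as \<open>\<delta> \<rightarrow> 0\<close>.\<close>
lemma gibbs_stationary: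
  assumes opt: "\<And>\<delta>. 0 < \<delta> \<Longrightarrow> \<delta> \<le> 1 \<Longrightarrow> dual 1 + c \<le> dual (1 - \<delta>) + (1 - \<delta>) * c"
  shows "(\<integral>\<omega>. (\<Sum>l\<in>I. gibbs \<omega> l * b l \<omega>) \<partial>M) + c \<le> 0"
proof -
  define D where "D = (\<integral>\<omega>. (\<Sum>l\<in>I. gibbs \<omega> l * b l \<omega>) \<partial>M) + c"
  have small: "\<forall>\<^sub>F \<delta> in at_right 0. 0 < \<delta> \<and> \<delta> \<le> 1 \<and> \<beta> * \<delta> * C < 1"
  proof -
    have "((\<lambda>\<delta>. \<beta> * \<delta> * C) \<longlongrightarrow> 0) (at_right (0::real))"
      by (intro tendsto_eq_intros) auto
    then have "\<forall>\<^sub>F \<delta> in at_right 0. \<beta> * \<delta> * C < 1" by (rule order_tendstoD) simp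
    moreover have "\<forall>\<^sub>F \<delta> in at_right (0::real). 0 < \<delta> \<and> \<delta> \<le> 1"
      by (simp add: eventually_at_right_field) (metis zero_less_one less_eq_real_def)
    ultimately show ?thesis by eventually_elim auto
  qed
  have "\<forall>\<^sub>F \<delta> in at_right 0. D \<le> \<beta> * C\<^sup>2 * \<delta>"
    using small
  proof eventually_elim
    case (elim \<delta>)
    then have "dual 1 + c \<le> dual 1 - \<delta> * (D - c) + \<beta> * \<delta>\<^sup>2 * C\<^sup>2 + (1 - \<delta>) * c"
      using opt[of \<delta>] dual_shrink_le[of \<delta>] unfolding D_def by auto
    then have "\<delta> * D \<le> \<delta> * (\<beta> * C\<^sup>2 * \<delta>)" by (simp add: algebra_simps power2_eq_square)
    then show ?case using elim by simp
  qed
  moreover have "((\<lambda>\<delta>. \<beta> * C\<^sup>2 * \<delta>) \<longlongrightarrow> 0) (at_right (0::real))"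
    by (intro tendsto_eq_intros) auto
  ultimately have "D \<le> 0"
    by (intro tendsto_lowerbound[where F = "at_right 0"]) auto
  then show ?thesis unfolding D_def .
qed

theorem gibbs_risk_le:
  assumes "\<And>\<delta>. 0 < \<delta> \<Longrightarrow> \<delta> \<le> 1 \<Longrightarrow> dual 1 + c \<le> dual (1 - \<delta>) + (1 - \<delta>) * c"
    and "random_weights p"
    and "- c \<le> (\<integral>\<omega>. (\<Sum>l\<in>I. p \<omega> l * b l \<omega>) \<partial>M)"
  shows "(\<integral>\<omega>. (\<Sum>l\<in>I. gibbs \<omega> l * r l \<omega>) \<partial>M) \<le> (\<integral>\<omega>. (\<Sum>l\<in>I. p \<omega> l * r l \<omega>) \<partial>M) + ln (card I) / \<beta>"
  using gibbs_stationary[OF assms(1)] dual_ge_weighted[OF assms(2)] dual_le_gibbs assms(3) by linarith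

end

lemma subalgebra_vimage_algebra: "X \<in> measurable M N \<Longrightarrow> subalgebra M (vimage_algebra (space M) X N)"
  unfolding subalgebra_def using sets_image_in_sets[of M "space M" X N] by auto

lemma (in finite_measure_subalgebra) AE_cond_exp_indicator_bounds:
  assumes "A \<in> sets M"
  shows "AE \<omega> in M. 0 \<le> real_cond_exp M F (indicator A) \<omega> \<and> real_cond_exp M F (indicator A) \<omega> \<le> 1"
proof -
  have int: "integrable M (indicator A :: 'a \<Rightarrow> real)"
    using assms by (intro integrable_real_indicator) (auto simp: emeasure_finite less_top[symmetric])
  have "AE \<omega> in M. 0 \<le> real_cond_exp M F (indicator A) \<omega>"
    by (rule real_cond_exp_ge_c[OF int]) auto
  moreover have "AE \<omega> in M. real_cond_exp M F (indicator A) \<omega> \<le> 1"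
    by (rule real_cond_exp_le_c[OF int]) (auto simp: indicator_def)
  ultimately show ?thesis by eventually_elim auto
qed

lemma (in finite_measure_subalgebra) integrable_cond_exp_square:
  assumes "Y \<in> borel_measurable M" "integrable M (\<lambda>\<omega>. (Y \<omega>)\<^sup>2)"
  shows "integrable M (\<lambda>\<omega>. (real_cond_exp M F Y \<omega>)\<^sup>2)"
  using assms square_integrable_imp_integrable[OF assms] convex_power2
  by (intro integrable_convex_cond_exp[where I = UNIV and a = 0 and b = 0 and q = "\<lambda>x. x\<^sup>2"]) auto

lemma (in finite_measure) integrable_square_diff_const:
  fixes g :: "'a \<Rightarrow> real"
  assumes [measurable]: "g \<in> borel_measurable M" and "integrable M (\<lambda>\<omega>. (g \<omega>)\<^sup>2)"
  shows "integrable M (\<lambda>\<omega>. (g \<omega> - a)\<^sup>2)"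
proof -
  have "integrable M g" using square_integrable_imp_integrable assms by blast
  with assms show ?thesis by (simp add: power2_diff)
qed

lemma abs_tfun_le:
  assumes "0 \<le> \<tau> s x" "\<tau> s x \<le> 1"
  shows "\<bar>tfun M S \<tau> s x\<bar> \<le> 1 + 1 / pS M S s"
proof -
  have "0 \<le> pS M S s" by (simp add: pS_def)
  then have "0 \<le> \<tau> s x / pS M S s" "\<tau> s x / pS M S s \<le> 1 / pS M S s"
    using assms by (auto intro: divide_right_mono)
  then show ?thesis unfolding tfun_def by auto
qed

text \<open>The functions \<open>t_s\<close> turn the demographic-parity gap of a prediction into an expectation.\<close>
lemma (in prob_space) integral_mult_tfun:
  fixes X :: "'a \<Rightarrow> 'x::topological_space" and S :: "'a \<Rightarrow> nat" and s :: nat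
  defines "A \<equiv> {\<omega>\<in>space M. S \<omega> = s}"
  assumes [measurable]: "X \<in> borel_measurable M" "f \<in> borel_measurable borel" "\<tau> s \<in> borel_measurable borel"
    and f_bounded: "\<And>x. \<bar>f x\<bar> \<le> c"
    and A: "A \<in> sets M"
    and \<tau>: "AE \<omega> in M. \<tau> s (X \<omega>) = real_cond_exp M (vimage_algebra (space M) X borel) (indicator A) \<omega>"
  shows "integrable M (\<lambda>\<omega>. f (X \<omega>) * tfun M S \<tau> s (X \<omega>))"
    and "(\<integral>\<omega>. f (X \<omega>) * tfun M S \<tau> s (X \<omega>) \<partial>M)
           = (\<integral>\<omega>. f (X \<omega>) \<partial>M) - (\<integral>\<omega>. f (X \<omega>) * indicator A \<omega> \<partial>M) / pS M S s"
proof -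
  define G where "G = vimage_algebra (space M) X borel"
  interpret G: finite_measure_subalgebra M G
    by unfold_locales (simp add: G_def subalgebra_vimage_algebra)
  have [measurable]: "(\<lambda>\<omega>. f (X \<omega>)) \<in> borel_measurable G"
    unfolding G_def by (rule measurable_compose[OF measurable_vimage_algebra1]) auto
  have [measurable]: "A \<in> sets M" by (rule A)
  have bounded: "integrable M (\<lambda>\<omega>. f (X \<omega>) * h \<omega>)"
    if [measurable]: "h \<in> borel_measurable M" and "AE \<omega> in M. \<bar>h \<omega>\<bar> \<le> 1" for h
    using that(2) f_bounded
    by (intro integrable_const_bound[where B = c]) (auto elim!: eventually_mono simp: abs_mult intro: order_trans[OF mult_left_le])
  have fA: "integrable M (\<lambda>\<omega>. f (X \<omega>) * indicator A \<omega>)"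
    by (rule bounded) (auto simp: indicator_def)
  have f\<tau>: "AE \<omega> in M. f (X \<omega>) * \<tau> s (X \<omega>) = f (X \<omega>) * real_cond_exp M G (indicator A) \<omega>"
    using \<tau> unfolding G_def by eventually_elim simp
  have int_f\<tau>: "integrable M (\<lambda>\<omega>. f (X \<omega>) * \<tau> s (X \<omega>))"
    using G.real_cond_exp_intg(1)[OF fA] by (subst integrable_cong_AE[OF _ _ f\<tau>]) auto
  have eq_f\<tau>: "(\<integral>\<omega>. f (X \<omega>) * \<tau> s (X \<omega>) \<partial>M) = (\<integral>\<omega>. f (X \<omega>) * indicator A \<omega> \<partial>M)"
    using G.real_cond_exp_intg(2)[OF fA] integral_cong_AE[OF _ _ f\<tau>] by auto
  have int_f: "integrable M (\<lambda>\<omega>. f (X \<omega>))"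
    using bounded[of "\<lambda>_. 1"] by simp
  have t: "f (X \<omega>) * tfun M S \<tau> s (X \<omega>) = f (X \<omega>) - f (X \<omega>) * \<tau> s (X \<omega>) / pS M S s" for \<omega>
    unfolding tfun_def by (simp add: algebra_simps)
  show "integrable M (\<lambda>\<omega>. f (X \<omega>) * tfun M S \<tau> s (X \<omega>))"
    unfolding t using int_f int_f\<tau> by auto
  show "(\<integral>\<omega>. f (X \<omega>) * tfun M S \<tau> s (X \<omega>) \<partial>M)
      = (\<integral>\<omega>. f (X \<omega>) \<partial>M) - (\<integral>\<omega>. f (X \<omega>) * indicator A \<omega> \<partial>M) / pS M S s"
    unfolding t using int_f int_f\<tau> by (simp add: eq_f\<tau>)
qed

definition constraint_score :: "'a measure \<Rightarrow> ('a \<Rightarrow> nat) \<Rightarrow> nat \<Rightarrow> (nat \<Rightarrow> 'x \<Rightarrow> real)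
    \<Rightarrow> (int \<Rightarrow> nat \<Rightarrow> real) \<Rightarrow> (int \<Rightarrow> nat \<Rightarrow> real) \<Rightarrow> int \<Rightarrow> 'x \<Rightarrow> real" where
  "constraint_score M S K \<tau> \<Lambda> V l x = (\<Sum>s\<in>{1..K}. (\<Lambda> l s - V l s) * tfun M S \<tau> s x)"

definition penalty :: "nat \<Rightarrow> nat \<Rightarrow> (nat \<Rightarrow> real) \<Rightarrow> (int \<Rightarrow> nat \<Rightarrow> real) \<Rightarrow> (int \<Rightarrow> nat \<Rightarrow> real) \<Rightarrow> real" where
  "penalty K L \<epsilon> \<Lambda> V = (\<Sum>l\<in>{-int L..int L}. \<Sum>s\<in>{1..K}. (\<Lambda> l s + V l s) * \<epsilon> s)"

lemma score_eq_constraint_score: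
  "score M S K B L \<eta> \<tau> \<Lambda> V l x = constraint_score M S K \<tau> \<Lambda> V l x - rfun B L \<eta> l x"
  by (simp add: score_def constraint_score_def)

lemma Fobj_scaled:
  "Fobj M X S K B L \<beta> \<epsilon> \<eta> \<tau> (\<lambda>l s. a * \<Lambda> l s) (\<lambda>l s. a * V l s)
     = (\<integral>\<omega>. LSE \<beta> {-int L..int L}
          (\<lambda>l. a * constraint_score M S K \<tau> \<Lambda> V l (X \<omega>) - rfun B L \<eta> l (X \<omega>)) \<partial>M)
       + a * penalty K L \<epsilon> \<Lambda> V"
proof -
  have "constraint_score M S K \<tau> (\<lambda>l s. a * \<Lambda> l s) (\<lambda>l s. a * V l s) l x
      = a * constraint_score M S K \<tau> \<Lambda> V l x" for l x
    unfolding constraint_score_def sum_distrib_left by (intro sum.cong) (auto simp: algebra_simps)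
  moreover have "penalty K L \<epsilon> (\<lambda>l s. a * \<Lambda> l s) (\<lambda>l s. a * V l s) = a * penalty K L \<epsilon> \<Lambda> V"
    unfolding penalty_def sum_distrib_left by (intro sum.cong) (auto simp: algebra_simps)
  ultimately show ?thesis
    by (simp add: Fobj_def score_eq_constraint_score penalty_def)
qed

lemma risk_eq_integral_rfun:
  "risk M X B L \<eta> p = (\<integral>\<omega>. (\<Sum>l\<in>{-int L..int L}. p (X \<omega>) l * rfun B L \<eta> l (X \<omega>)) \<partial>M)"
  unfolding risk_def rfun_def by (simp add: power2_commute)

lemma abs_constraint_score_le:
  assumes "l \<in> {-int L..int L}" "\<forall>s\<in>{1..K}. \<bar>tfun M S \<tau> s x\<bar> \<le> 1 + 1 / pS M S s"
  shows "\<bar>constraint_score M S K \<tau> \<Lambda> V l x\<bar>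
           \<le> (\<Sum>l\<in>{-int L..int L}. \<Sum>s\<in>{1..K}. \<bar>\<Lambda> l s - V l s\<bar> * (1 + 1 / pS M S s))"
proof -
  have p: "0 \<le> 1 + 1 / pS M S s" for s by (simp add: pS_def add_nonneg_nonneg)
  have "\<bar>constraint_score M S K \<tau> \<Lambda> V l x\<bar> \<le> (\<Sum>s\<in>{1..K}. \<bar>\<Lambda> l s - V l s\<bar> * (1 + 1 / pS M S s))"
    unfolding constraint_score_def using assms(2)
    by (intro order_trans[OF sum_abs] sum_mono) (auto simp: abs_mult intro: mult_left_mono)
  also have "\<dots> \<le> (\<Sum>l\<in>{-int L..int L}. \<Sum>s\<in>{1..K}. \<bar>\<Lambda> l s - V l s\<bar> * (1 + 1 / pS M S s))"
    using assms(1) p by (intro member_le_sum[where f = "\<lambda>l. \<Sum>s\<in>{1..K}. _ l s"] sum_nonneg) auto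
  finally show ?thesis .
qed

lemma (in prob_space) penalty_fair_prediction:
  assumes [measurable]: "X \<in> borel_measurable M" "\<And>s. \<tau> s \<in> borel_measurable borel"
    and S: "\<And>s. {\<omega>\<in>space M. S \<omega> = s} \<in> sets M"
    and \<tau>: "\<forall>s\<in>{1..K}. AE \<omega> in M. \<tau> s (X \<omega>) =
             real_cond_exp M (vimage_algebra (space M) X borel) (indicator {\<omega>\<in>space M. S \<omega> = s}) \<omega>"
    and \<pi>: "grid_prediction L \<pi>"
    and fair: "\<forall>l\<in>{-int L..int L}. \<forall>s\<in>{1..K}. unfair M X S \<pi> s l \<le> \<epsilon> s"
    and nonneg: "\<forall>l\<in>{-int L..int L}. \<forall>s\<in>{1..K}. 0 \<le> \<Lambda> l s \<and> 0 \<le> V l s"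
  shows "- penalty K L \<epsilon> \<Lambda> V
           \<le> (\<integral>\<omega>. (\<Sum>l\<in>{-int L..int L}. \<pi> (X \<omega>) l * constraint_score M S K \<tau> \<Lambda> V l (X \<omega>)) \<partial>M)"
proof -
  define I where "I = {-int L..int L}"
  define e where "e l s = (\<integral>\<omega>. \<pi> (X \<omega>) l * tfun M S \<tau> s (X \<omega>) \<partial>M)" for l s
  have \<pi>_m [measurable]: "(\<lambda>x. \<pi> x l) \<in> borel_measurable borel" for l
    using \<pi> by (simp add: grid_prediction_def)
  have \<pi>_01: "\<bar>\<pi> x l\<bar> \<le> 1" for x l
  proof (cases "l \<in> I")
    case True
    then show ?thesis
      using \<pi> member_le_sum[of l I "\<pi> x"] by (simp add: grid_prediction_def I_def)
  qed (use \<pi> in \<open>simp add: grid_prediction_def I_def\<close>)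
  have int: "integrable M (\<lambda>\<omega>. \<pi> (X \<omega>) l * tfun M S \<tau> s (X \<omega>))"
    and e_le: "\<bar>e l s\<bar> \<le> \<epsilon> s" if "l \<in> I" "s \<in> {1..K}" for l s
    using integral_mult_tfun[where X = X and S = S and s = s and \<tau> = \<tau> and f = "\<lambda>x. \<pi> x l" and c = 1,
        OF assms(1) \<pi>_m assms(2) \<pi>_01 S \<tau>[rule_format, OF that(2)]]
      fair that unfolding e_def unfair_def I_def by (auto simp: abs_minus_commute)
  have "(\<integral>\<omega>. (\<Sum>l\<in>I. \<pi> (X \<omega>) l * constraint_score M S K \<tau> \<Lambda> V l (X \<omega>)) \<partial>M)
      = (\<integral>\<omega>. (\<Sum>l\<in>I. \<Sum>s\<in>{1..K}. (\<Lambda> l s - V l s) * (\<pi> (X \<omega>) l * tfun M S \<tau> s (X \<omega>))) \<partial>M)"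
    by (simp add: constraint_score_def sum_distrib_left mult_ac)
  also have "\<dots> = (\<Sum>l\<in>I. (\<integral>\<omega>. (\<Sum>s\<in>{1..K}. (\<Lambda> l s - V l s) * (\<pi> (X \<omega>) l * tfun M S \<tau> s (X \<omega>))) \<partial>M))"
    using int by (intro Bochner_Integration.integral_sum Bochner_Integration.integrable_sum) auto
  also have "\<dots> = (\<Sum>l\<in>I. \<Sum>s\<in>{1..K}. (\<Lambda> l s - V l s) * e l s)"
    unfolding e_def by (intro sum.cong refl, subst Bochner_Integration.integral_sum) (use int in auto)
  also have "\<dots> \<ge> (\<Sum>l\<in>I. \<Sum>s\<in>{1..K}. - ((\<Lambda> l s + V l s) * \<epsilon> s))"
  proof (intro sum_mono)
    fix l s assume "l \<in> I" "s \<in> {1..K}"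
    with nonneg e_le[of l s, unfolded abs_le_iff]
    have "\<Lambda> l s * (- \<epsilon> s) \<le> \<Lambda> l s * e l s" "V l s * e l s \<le> V l s * \<epsilon> s"
      unfolding I_def by (intro mult_left_mono; force)+
    then show "- ((\<Lambda> l s + V l s) * \<epsilon> s) \<le> (\<Lambda> l s - V l s) * e l s"
      by (simp add: algebra_simps)
  qed
  finally show ?thesis by (simp add: penalty_def sum_negf I_def)
qed

lemma (in prob_space) AE_abs_tfun_le:
  assumes "X \<in> borel_measurable M" "\<And>s. {\<omega>\<in>space M. S \<omega> = s} \<in> sets M"
    and \<tau>: "\<forall>s\<in>{1..K}. AE \<omega> in M. \<tau> s (X \<omega>) =
             real_cond_exp M (vimage_algebra (space M) X borel) (indicator {\<omega>\<in>space M. S \<omega> = s}) \<omega>"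
  shows "AE \<omega> in M. \<forall>s\<in>{1..K}. \<bar>tfun M S \<tau> s (X \<omega>)\<bar> \<le> 1 + 1 / pS M S s"
proof (rule eventually_ball_finite[OF finite_atLeastAtMost], intro ballI)
  fix s assume s: "s \<in> {1..K}"
  interpret G: finite_measure_subalgebra M "vimage_algebra (space M) X borel"
    by unfold_locales (rule subalgebra_vimage_algebra[OF assms(1)])
  show "AE \<omega> in M. \<bar>tfun M S \<tau> s (X \<omega>)\<bar> \<le> 1 + 1 / pS M S s"
    using G.AE_cond_exp_indicator_bounds[OF assms(2)] \<tau>[rule_format, OF s]
    by eventually_elim (auto intro: abs_tfun_le)
qed

lemma (in prob_space) LSE_duality_regression:
  assumes [measurable]: "X \<in> borel_measurable M" "\<eta> \<in> borel_measurable borel" "\<And>s. \<tau> s \<in> borel_measurable borel"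
    and Y: "Y \<in> borel_measurable M" "integrable M (\<lambda>\<omega>. (Y \<omega>)\<^sup>2)"
    and \<eta>: "AE \<omega> in M. \<eta> (X \<omega>) = real_cond_exp M (vimage_algebra (space M) X borel) Y \<omega>"
    and S: "\<And>s. {\<omega>\<in>space M. S \<omega> = s} \<in> sets M"
    and \<tau>: "\<forall>s\<in>{1..K}. AE \<omega> in M. \<tau> s (X \<omega>) =
             real_cond_exp M (vimage_algebra (space M) X borel) (indicator {\<omega>\<in>space M. S \<omega> = s}) \<omega>"
    and "0 < \<beta>"
  shows "\<exists>C. LSE_duality M {-int L..int L} \<beta> (\<lambda>l \<omega>. constraint_score M S K \<tau> \<Lambda> V l (X \<omega>))
           (\<lambda>l \<omega>. rfun B L \<eta> l (X \<omega>)) C"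
proof
  interpret G: finite_measure_subalgebra M "vimage_algebra (space M) X borel"
    by unfold_locales (rule subalgebra_vimage_algebra, measurable)
  have \<eta>_sq: "integrable M (\<lambda>\<omega>. (\<eta> (X \<omega>))\<^sup>2)"
    using G.integrable_cond_exp_square[OF Y] \<eta>
    by (subst integrable_cong_AE[where g = "\<lambda>\<omega>. (real_cond_exp M _ Y \<omega>)\<^sup>2"]) (auto elim!: eventually_mono)
  show "LSE_duality M {-int L..int L} \<beta> (\<lambda>l \<omega>. constraint_score M S K \<tau> \<Lambda> V l (X \<omega>))
      (\<lambda>l \<omega>. rfun B L \<eta> l (X \<omega>))
      (\<Sum>l\<in>{-int L..int L}. \<Sum>s\<in>{1..K}. \<bar>\<Lambda> l s - V l s\<bar> * (1 + 1 / pS M S s))"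
  proof unfold_locales
    show "(\<lambda>\<omega>. constraint_score M S K \<tau> \<Lambda> V l (X \<omega>)) \<in> borel_measurable M" for l
      unfolding constraint_score_def tfun_def by measurable
    show "integrable M (\<lambda>\<omega>. rfun B L \<eta> l (X \<omega>))" for l
      unfolding rfun_def using \<eta>_sq by (intro integrable_square_diff_const) auto
    show "AE \<omega> in M. \<forall>l\<in>{-int L..int L}. \<bar>constraint_score M S K \<tau> \<Lambda> V l (X \<omega>)\<bar>
        \<le> (\<Sum>l\<in>{-int L..int L}. \<Sum>s\<in>{1..K}. \<bar>\<Lambda> l s - V l s\<bar> * (1 + 1 / pS M S s))"
      using AE_abs_tfun_le[OF assms(1) S \<tau>] by eventually_elim (blast intro: abs_constraint_score_le)
  qed (use \<open>0 < \<beta>\<close> in \<open>auto simp: rfun_def\<close>)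
qed

theorem lemma3p3:
  fixes M :: "'a measure"
    and X :: "'a \<Rightarrow> real ^ 'd"
    and S :: "'a \<Rightarrow> nat"
    and Y :: "'a \<Rightarrow> real"
    and K L :: nat
    and B \<beta> :: real
    and \<epsilon> :: "nat \<Rightarrow> real"
    and \<eta> :: "real ^ 'd \<Rightarrow> real"
    and \<tau> :: "nat \<Rightarrow> real ^ 'd \<Rightarrow> real"
    and \<Lambda>s Vs :: "int \<Rightarrow> nat \<Rightarrow> real"
    and \<pi> :: "real ^ 'd \<Rightarrow> int \<Rightarrow> real"
  assumes P: "prob_space M"
    and K: "K \<ge> 2"
    and Xm: "X \<in> borel_measurable M"
    and Sm: "S \<in> measurable M (count_space UNIV)"
    and Srange: "\<forall>\<omega>\<in>space M. S \<omega> \<in> {1..K}"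
    and Ym: "Y \<in> borel_measurable M"
    and Y2: "integrable M (\<lambda>\<omega>. (Y \<omega>)\<^sup>2)"
    and ps: "\<forall>s\<in>{1..K}. pS M S s > 0"
    and eta_m: "\<eta> \<in> borel_measurable borel"
    and eta: "AE \<omega> in M. \<eta> (X \<omega>) = real_cond_exp M (vimage_algebra (space M) X borel) Y \<omega>"
    and tau_m: "\<forall>s. \<tau> s \<in> borel_measurable borel"
    and tau: "\<forall>s\<in>{1..K}. AE \<omega> in M. \<tau> s (X \<omega>) =
                 real_cond_exp M (vimage_algebra (space M) X borel)
                   (indicator {\<omega>\<in>space M. S \<omega> = s}) \<omega>"
    and B: "B > 0"
    and L: "L \<ge> 1"
    and beta: "\<beta> > 0"
    and eps: "\<forall>s\<in>{1..K}. 0 \<le> \<epsilon> s \<and> \<epsilon> s \<le> 1"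
    and nonneg_star: "\<forall>l\<in>{-int L..int L}. \<forall>s\<in>{1..K}. 0 \<le> \<Lambda>s l s \<and> 0 \<le> Vs l s"
    and minimizer: "\<forall>\<Lambda> V. (\<forall>l\<in>{-int L..int L}. \<forall>s\<in>{1..K}. 0 \<le> \<Lambda> l s \<and> 0 \<le> V l s) \<longrightarrow>
                      Fobj M X S K B L \<beta> \<epsilon> \<eta> \<tau> \<Lambda>s Vs \<le> Fobj M X S K B L \<beta> \<epsilon> \<eta> \<tau> \<Lambda> V"
    and pi_grid: "grid_prediction L \<pi>"
    and pi_fair: "\<forall>l\<in>{-int L..int L}. \<forall>s\<in>{1..K}. unfair M X S \<pi> s l \<le> \<epsilon> s"
  shows "risk M X B L \<eta> (pi_dual M S K B L \<beta> \<eta> \<tau> \<Lambda>s Vs)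
           \<le> risk M X B L \<eta> \<pi> + ln (2 * real L + 1) / \<beta>"
proof -
  interpret prob_space M by (rule P)
  have S_sets: "{\<omega>\<in>space M. S \<omega> = s} \<in> sets M" for s
    using measurable_sets[OF Sm, of "{s}"] by (simp add: vimage_def Int_def conj_commute)
  define I where "I = {-int L..int L}"
  define b where "b l \<omega> = constraint_score M S K \<tau> \<Lambda>s Vs l (X \<omega>)" for l \<omega>
  define r where "r l \<omega> = rfun B L \<eta> l (X \<omega>)" for l \<omega>
  obtain C where "LSE_duality M I \<beta> b r C"
    using LSE_duality_regression[OF Xm eta_m tau_m[rule_format] Ym Y2 eta S_sets tau beta]
    unfolding I_def b_def[abs_def] r_def[abs_def] by blast
  then interpret D: LSE_duality M I \<beta> b r C .
  have dual_eq: "D.dual a = Fobj M X S K B L \<beta> \<epsilon> \<eta> \<tau> (\<lambda>l s. a * \<Lambda>s l s) (\<lambda>l s. a * Vs l s)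
      - a * penalty K L \<epsilon> \<Lambda>s Vs" for a
    unfolding D.dual_def by (simp add: Fobj_scaled b_def r_def I_def)
  have "D.dual 1 + penalty K L \<epsilon> \<Lambda>s Vs \<le> D.dual (1 - \<delta>) + (1 - \<delta>) * penalty K L \<epsilon> \<Lambda>s Vs"
    if "0 < \<delta>" "\<delta> \<le> 1" for \<delta>
    using minimizer[rule_format, of "\<lambda>l s. (1 - \<delta>) * \<Lambda>s l s" "\<lambda>l s. (1 - \<delta>) * Vs l s"] nonneg_star that
    by (simp add: dual_eq)
  moreover have "D.random_weights (\<lambda>\<omega>. \<pi> (X \<omega>))"
    unfolding D.random_weights_def using pi_grid
    by (auto simp: grid_prediction_def I_def intro: measurable_compose[OF Xm])
  moreover have "- penalty K L \<epsilon> \<Lambda>s Vs \<le> (\<integral>\<omega>. (\<Sum>l\<in>I. \<pi> (X \<omega>) l * b l \<omega>) \<partial>M)"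
    unfolding b_def I_def using tau_m
    by (intro penalty_fair_prediction[OF Xm _ S_sets tau pi_grid pi_fair nonneg_star]) auto
  ultimately have "(\<integral>\<omega>. (\<Sum>l\<in>I. D.gibbs \<omega> l * r l \<omega>) \<partial>M)
      \<le> (\<integral>\<omega>. (\<Sum>l\<in>I. \<pi> (X \<omega>) l * r l \<omega>) \<partial>M) + ln (card I) / \<beta>"
    by (rule D.gibbs_risk_le)
  moreover have "D.gibbs \<omega> = pi_dual M S K B L \<beta> \<eta> \<tau> \<Lambda>s Vs (X \<omega>)" for \<omega>
    unfolding D.gibbs_def by (simp add: fun_eq_iff pi_dual_def score_eq_constraint_score b_def r_def I_def)
  ultimately show ?thesis
    by (simp add: risk_eq_integral_rfun r_def I_def)
qed

end
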